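(* Assume the Standing Setting below. Let $n\in\mathbb Z$ and let $\zeta_1,\dots,\zeta_{m_n}$ be a finite frame for $\mathcal A_n$ with $\sum_{j=1}^{m_n}\phi(\zeta_j)\delta(\zeta_j^* )=0$. Then the associated Grassmann connection satisfies, for all $x\in\mathcal A_n$ and $\xi\in H_0$, $$\sum_{j=1}^{m_n}\phi(\zeta_j)\,\delta_0(\zeta_j^*x)\,\xi=\mu^{-n}\delta(x)\xi .$$
   Context: Standing Setting: $A$ is a unital $C^*$-algebra with a strongly continuous action $\sigma$ of $S^1$; $A_n:=\{a:\sigma_\lambda(a)=\lambda^na\ \forall\lambda\}$, $P_0(a):=\frac1{2\pi}\int_0^{2\pi}\sigma_{e^{it}}(a)dt$. $\mathcal A\subseteq A$ is a norm-dense unital $*$-subalgebra with $P_0(\mathcal A)\subseteq\mathcal A$, generated as a $*$-algebra by $\mathcal A\cap A_1$; $\mathcal A_n:=\mathcal A\cap A_n$. $H_0$ is a separable Hilbert space, $\rho:A_0\to\mathcal B(H_0)$ an injective unital $*$-homomorphism, $D_0$ a selfadjoint operator on $H_0$ such that for every $a\in\mathcal A_0$, $\rho(a)$ preserves $\operatorname{Dom}(D_0)$ and $[D_0,\rho(a)]$ extends to a bounded operator $\delta_0(a)$. $H$ is a separable Hilbert space containing $H_0$ as a closed subspace, $\phi:A\to\mathcal B(H)$ a unital $*$-homomorphism and $\delta:\mathcal A\to\mathcal B(H)$ linear with (1) $\delta(a)\xi=\delta_0(a)\xi$, $\phi(a)\xi=\rho(a)\xi$ for $a\in\mathcal A_0,\xi\in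 H_0$; (2) some $\mu>0$ with $\delta(ab)=\delta(a)\phi(b)+\mu^n\phi(a)\delta(b)$ for $a\in\mathcal A_n$, $b\in\mathcal A$; (3) $\zeta^R_1,\dots,\zeta^R_k,\zeta^L_1,\dots,\zeta^L_m\in\mathcal A_1$ with $\sum_j\zeta_j^R(\zeta_j^R)^*=1=\sum_j(\zeta_j^L)^*\zeta_j^L$ and $\sum_j\phi(\zeta^R_j)\delta((\zeta^R_j)^* )=0=\sum_j\phi(\zeta_j^L)^*\delta(\zeta_j^L)$. A finite frame for $\mathcal A_n$: $\zeta_1,\dots,\zeta_p\in\mathcal A_n$ with $\sum_j\zeta_j\zeta_j^*x=x$ for $x\in\mathcal A_n$. The Grassmann connection of the frame is $\nabla_{\mathrm{Gr}}(x)=\sum_j\zeta_j\otimes\delta_0(\zeta_j^*x)$; identifying $A_n\widehat\otimes_\rho H_0$ with a subspace of $H$ via $x\otimes\xi\mapsto\phi(x)\xi$, its evaluation at $\xi\in H_0$ is the vector $\sum_j\phi(\zeta_j)\delta_0(\zeta_j^*x)\xi$ displayed in the claim. *)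

theory Defs
  imports "HOL-Analysis.Analysis"
begin

text \<open>Complex vector space structure on a real normed vector space, given by an
explicit complex scalar multiplication compatible with the real one and the norm.\<close>
definition complex_normed_structure :: "(complex \<Rightarrow> 'v::real_normed_vector \<Rightarrow> 'v) \<Rightarrow> bool" where
  "complex_normed_structure sc \<longleftrightarrow>
     (\<forall>c x y. sc c (x + y) = sc c x + sc c y) \<and>
     (\<forall>c d x. sc (c + d) x = sc c x + sc d x) \<and>
     (\<forall>c d x. sc (c * d) x = sc c (sc d x)) \<and>
     (\<forall>r x. sc (complex_of_real r) x = r *\<^sub>R x) \<and>
     (\<forall>c x. norm (sc c x) = cmod c * norm x)"

definition unital_cstar_algebra ::
  "(complex \<Rightarrow> 'a::{real_normed_algebra_1,banach} \<Rightarrow> 'a) \<Rightarrow> ('a \<Rightarrow> 'a) \<Rightarrow> bool" where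
  "unital_cstar_algebra sc st \<longleftrightarrow>
     complex_normed_structure sc \<and>
     (\<forall>c x y. sc c (x * y) = sc c x * y \<and> sc c (x * y) = x * sc c y) \<and>
     (\<forall>x y. st (x + y) = st x + st y) \<and>
     (\<forall>c x. st (sc c x) = sc (cnj c) (st x)) \<and>
     (\<forall>x y. st (x * y) = st y * st x) \<and>
     (\<forall>x. st (st x) = x) \<and>
     (\<forall>x. norm (st x * x) = (norm x)\<^sup>2)"

text \<open>Complex Hilbert space structure on a real Banach space (the whole type):
inner product linear in the first argument, norm induced by the inner product.\<close>
definition complex_hilbert ::
  "(complex \<Rightarrow> 'h::banach \<Rightarrow> 'h) \<Rightarrow> ('h \<Rightarrow> 'h \<Rightarrow> complex) \<Rightarrow> bool" where
  "complex_hilbert sc ip \<longleftrightarrow>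
     complex_normed_structure sc \<and>
     (\<forall>x y z. ip (x + y) z = ip x z + ip y z) \<and>
     (\<forall>c x y. ip (sc c x) y = c * ip x y) \<and>
     (\<forall>x y. ip y x = cnj (ip x y)) \<and>
     (\<forall>x. ip x x = complex_of_real ((norm x)\<^sup>2))"

definition separable_set :: "'h::metric_space set \<Rightarrow> bool" where
  "separable_set S \<longleftrightarrow> (\<exists>D. countable D \<and> D \<subseteq> S \<and> S \<subseteq> closure D)"

definition complex_subspace :: "(complex \<Rightarrow> 'h::real_vector \<Rightarrow> 'h) \<Rightarrow> 'h set \<Rightarrow> bool" where
  "complex_subspace sc S \<longleftrightarrow> 0 \<in> S \<and> (\<forall>x\<in>S. \<forall>y\<in>S. x + y \<in> S) \<and> (\<forall>c. \<forall>x\<in>S. sc c x \<in> S)"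

definition bounded_clinear_op :: "(complex \<Rightarrow> 'h::real_normed_vector \<Rightarrow> 'h) \<Rightarrow> ('h \<Rightarrow> 'h) \<Rightarrow> bool" where
  "bounded_clinear_op sc f \<longleftrightarrow> bounded_linear f \<and> (\<forall>c x. f (sc c x) = sc c (f x))"

text \<open>Bounded complex-linear operator on the closed subspace S (an element of B(S));
only its values on S matter.\<close>
definition bounded_clinear_on :: "(complex \<Rightarrow> 'h::real_normed_vector \<Rightarrow> 'h) \<Rightarrow> 'h set \<Rightarrow> ('h \<Rightarrow> 'h) \<Rightarrow> bool" where
  "bounded_clinear_on sc S f \<longleftrightarrow>
     f ` S \<subseteq> S \<and>
     (\<forall>x\<in>S. \<forall>y\<in>S. f (x + y) = f x + f y) \<and>
     (\<forall>c. \<forall>x\<in>S. f (sc c x) = sc c (f x)) \<and>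
     (\<exists>K. \<forall>x\<in>S. norm (f x) \<le> K * norm x)"

definition spectral_subspace ::
  "(complex \<Rightarrow> 'a \<Rightarrow> 'a) \<Rightarrow> (complex \<Rightarrow> 'a \<Rightarrow> 'a) \<Rightarrow> int \<Rightarrow> 'a set" where
  "spectral_subspace sc \<sigma> n = {a. \<forall>l\<in>sphere (0::complex) 1. \<sigma> l a = sc (l powi n) a}"

definition P0 :: "(complex \<Rightarrow> 'a::real_normed_vector \<Rightarrow> 'a) \<Rightarrow> 'a \<Rightarrow> 'a" where
  "P0 \<sigma> a = (1 / (2 * pi)) *\<^sub>R integral {0..2*pi} (\<lambda>t. \<sigma> (cis t) a)"

definition circle_action ::
  "(complex \<Rightarrow> 'a::{real_normed_algebra_1} \<Rightarrow> 'a) \<Rightarrow> ('a \<Rightarrow> 'a) \<Rightarrow> (complex \<Rightarrow> 'a \<Rightarrow> 'a) \<Rightarrow> bool" where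
  "circle_action sc st \<sigma> \<longleftrightarrow>
     (\<forall>l\<in>sphere 0 1. \<forall>a b. \<sigma> l (a + b) = \<sigma> l a + \<sigma> l b) \<and>
     (\<forall>l\<in>sphere 0 1. \<forall>c a. \<sigma> l (sc c a) = sc c (\<sigma> l a)) \<and>
     (\<forall>l\<in>sphere 0 1. \<forall>a b. \<sigma> l (a * b) = \<sigma> l a * \<sigma> l b) \<and>
     (\<forall>l\<in>sphere 0 1. \<forall>a. \<sigma> l (st a) = st (\<sigma> l a)) \<and>
     (\<forall>l\<in>sphere 0 1. \<sigma> l 1 = 1) \<and>
     (\<forall>a. \<sigma> 1 a = a) \<and>
     (\<forall>l\<in>sphere 0 1. \<forall>m\<in>sphere 0 1. \<forall>a. \<sigma> (l * m) a = \<sigma> l (\<sigma> m a)) \<and>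
     (\<forall>a. continuous_on (sphere 0 1) (\<lambda>l. \<sigma> l a))"

inductive_set star_alg_gen ::
  "(complex \<Rightarrow> 'a::ring_1 \<Rightarrow> 'a) \<Rightarrow> ('a \<Rightarrow> 'a) \<Rightarrow> 'a set \<Rightarrow> 'a set"
  for sc :: "complex \<Rightarrow> 'a \<Rightarrow> 'a" and st :: "'a \<Rightarrow> 'a" and S :: "'a set" where
  gen_one: "1 \<in> star_alg_gen sc st S"
| gen_base: "x \<in> S \<Longrightarrow> x \<in> star_alg_gen sc st S"
| gen_add: "x \<in> star_alg_gen sc st S \<Longrightarrow> y \<in> star_alg_gen sc st S \<Longrightarrow> x + y \<in> star_alg_gen sc st S"
| gen_scale: "x \<in> star_alg_gen sc st S \<Longrightarrow> sc c x \<in> star_alg_gen sc st S"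
| gen_mult: "x \<in> star_alg_gen sc st S \<Longrightarrow> y \<in> star_alg_gen sc st S \<Longrightarrow> x * y \<in> star_alg_gen sc st S"
| gen_star: "x \<in> star_alg_gen sc st S \<Longrightarrow> st x \<in> star_alg_gen sc st S"

definition unital_star_subalgebra ::
  "(complex \<Rightarrow> 'a::ring_1 \<Rightarrow> 'a) \<Rightarrow> ('a \<Rightarrow> 'a) \<Rightarrow> 'a set \<Rightarrow> bool" where
  "unital_star_subalgebra sc st B \<longleftrightarrow>
     1 \<in> B \<and> (\<forall>x\<in>B. \<forall>y\<in>B. x + y \<in> B \<and> x * y \<in> B) \<and>
     (\<forall>c. \<forall>x\<in>B. sc c x \<in> B) \<and> (\<forall>x\<in>B. st x \<in> B)"

text \<open>Selfadjoint (possibly unbounded) operator D with domain Dom on the closed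
subspace H0: densely defined, symmetric, and Dom(D^*) contained in Dom(D).\<close>
definition selfadjoint_on ::
  "(complex \<Rightarrow> 'h::real_normed_vector \<Rightarrow> 'h) \<Rightarrow> ('h \<Rightarrow> 'h \<Rightarrow> complex) \<Rightarrow> 'h set \<Rightarrow> 'h set \<Rightarrow> ('h \<Rightarrow> 'h) \<Rightarrow> bool" where
  "selfadjoint_on sc ip H0 Dom D \<longleftrightarrow>
     Dom \<subseteq> H0 \<and> complex_subspace sc Dom \<and> H0 \<subseteq> closure Dom \<and>
     D ` Dom \<subseteq> H0 \<and>
     (\<forall>x\<in>Dom. \<forall>y\<in>Dom. D (x + y) = D x + D y) \<and>
     (\<forall>c. \<forall>x\<in>Dom. D (sc c x) = sc c (D x)) \<and>
     (\<forall>x\<in>Dom. \<forall>y\<in>Dom. ip (D x) y = ip x (D y)) \<and>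
     (\<forall>y\<in>H0. (\<exists>z\<in>H0. \<forall>x\<in>Dom. ip (D x) y = ip x z) \<longrightarrow> y \<in> Dom)"

end

theory Submission
  imports Defs
begin

text \<open>Each \<open>\<zeta>\<^sub>j\<^sup>* x\<close> lies in \<open>\<A>\<^sub>0\<close>, where \<open>\<delta>\<^sub>0\<close> agrees with \<open>\<delta>\<close>, so the twisted Leibniz rule gives
  \<open>\<delta>\<^sub>0(\<zeta>\<^sub>j\<^sup>* x)\<xi> = \<delta>(\<zeta>\<^sub>j\<^sup>*)\<phi>(x)\<xi> + \<mu>\<^sup>-\<^sup>n \<phi>(\<zeta>\<^sub>j\<^sup>*)\<delta>(x)\<xi>\<close>. After applying \<open>\<phi>(\<zeta>\<^sub>j)\<close> and
  summing, the first terms cancel by hypothesis and the second add up to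
  \<open>\<mu>\<^sup>-\<^sup>n \<phi>(\<Sum>\<^sub>j \<zeta>\<^sub>j\<zeta>\<^sub>j\<^sup>*)\<delta>(x)\<xi>\<close>. Finally \<open>e = \<Sum>\<^sub>j \<zeta>\<^sub>j\<zeta>\<^sub>j\<^sup>*\<close> is a left unit for \<open>\<A>\<^sub>n\<close>, and
  the relations \<open>\<Sum> \<zeta>\<^sup>R(\<zeta>\<^sup>R)\<^sup>* = 1 = \<Sum> (\<zeta>\<^sup>L)\<^sup>*\<zeta>\<^sup>L\<close> show that \<open>1\<close> lies in the right ideal
  generated by \<open>\<A>\<^sub>n\<close>, whence \<open>e = 1\<close>.\<close>

lemma module_complex_normed_structure:
  assumes "complex_normed_structure sc"
  shows "module sc"
  using assms unfolding complex_normed_structure_def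
  by unfold_locales (simp_all, metis of_real_1 scaleR_one)

lemma cnj_powi_unimodular:
  assumes "cmod l = 1"
  shows "cnj (l powi i) = l powi (- i)"
proof -
  have "l * cnj l = 1" using complex_norm_square[of l] assms by simp
  then have "cnj l = inverse l" by (metis inverse_unique)
  then have "cnj (l powi i) = inverse l powi i" by (metis complex_cnj_power_int)
  also have "\<dots> = l powi (- i)" by (simp add: power_int_minus power_int_inverse)
  finally show ?thesis .
qed

lemma spectral_subspace_mult:
  assumes cstar: "unital_cstar_algebra sc st" and action: "circle_action sc st \<sigma>"
    and a: "a \<in> spectral_subspace sc \<sigma> i" and b: "b \<in> spectral_subspace sc \<sigma> j"
  shows "a * b \<in> spectral_subspace sc \<sigma> (i + j)"
  unfolding spectral_subspace_def
proof (intro CollectI ballI)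
  fix l :: complex assume l: "l \<in> sphere 0 1"
  interpret module sc
    using cstar module_complex_normed_structure unfolding unital_cstar_algebra_def by blast
  have scale_mult: "\<And>c x y. sc c (x * y) = sc c x * y \<and> sc c (x * y) = x * sc c y"
    using cstar unfolding unital_cstar_algebra_def by blast
  have "\<sigma> l (a * b) = \<sigma> l a * \<sigma> l b" using action l unfolding circle_action_def by blast
  also have "\<dots> = sc (l powi i) a * sc (l powi j) b" using a b l unfolding spectral_subspace_def by auto
  also have "\<dots> = sc (l powi i * l powi j) (a * b)" using scale_mult by (metis scale_scale)
  also have "l powi i * l powi j = l powi (i + j)" using l by (subst power_int_add) auto
  finally show "\<sigma> l (a * b) = sc (l powi (i + j)) (a * b)" .
qed

lemma spectral_subspace_star:
  assumes cstar: "unital_cstar_algebra sc st" and action: "circle_action sc st \<sigma>"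
    and a: "a \<in> spectral_subspace sc \<sigma> i"
  shows "st a \<in> spectral_subspace sc \<sigma> (- i)"
  unfolding spectral_subspace_def
proof (intro CollectI ballI)
  fix l :: complex assume l: "l \<in> sphere 0 1"
  have "\<sigma> l (st a) = st (\<sigma> l a)" using action l unfolding circle_action_def by blast
  also have "\<dots> = st (sc (l powi i) a)" using a l unfolding spectral_subspace_def by auto
  also have "\<dots> = sc (cnj (l powi i)) (st a)" using cstar unfolding unital_cstar_algebra_def by blast
  also have "cnj (l powi i) = l powi (- i)" using l by (intro cnj_powi_unimodular) simp
  finally show "\<sigma> l (st a) = sc (l powi (- i)) (st a)" .
qed

lemma one_in_spectral_subspace_zero:
  assumes cstar: "unital_cstar_algebra sc st" and action: "circle_action sc st \<sigma>"
  shows "1 \<in> spectral_subspace sc \<sigma> 0"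
proof -
  interpret module sc
    using cstar module_complex_normed_structure unfolding unital_cstar_algebra_def by blast
  show ?thesis using action unfolding spectral_subspace_def circle_action_def by simp
qed

inductive_set right_ideal_gen :: "'a::ring_1 set \<Rightarrow> 'a set" for S :: "'a set" where
  base: "a \<in> S \<Longrightarrow> a \<in> right_ideal_gen S"
| zero: "0 \<in> right_ideal_gen S"
| add: "y \<in> right_ideal_gen S \<Longrightarrow> z \<in> right_ideal_gen S \<Longrightarrow> y + z \<in> right_ideal_gen S"
| mult_right: "y \<in> right_ideal_gen S \<Longrightarrow> y * c \<in> right_ideal_gen S"

lemma right_ideal_gen_sum:
  "(\<And>j. j \<in> I \<Longrightarrow> f j \<in> right_ideal_gen S) \<Longrightarrow> (\<Sum>j\<in>I. f j) \<in> right_ideal_gen S"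
  by (induction I rule: infinite_finite_induct) (auto intro: right_ideal_gen.intros)

lemma right_ideal_gen_mult_left:
  assumes "y \<in> right_ideal_gen S" and "\<And>a. a \<in> S \<Longrightarrow> z * a \<in> T"
  shows "z * y \<in> right_ideal_gen T"
  using assms
  by induction (auto simp: distrib_left intro: right_ideal_gen.intros simp flip: mult.assoc)

lemma left_unit_right_ideal_gen:
  assumes "y \<in> right_ideal_gen S" and "\<And>a. a \<in> S \<Longrightarrow> e * a = a"
  shows "e * y = y"
  using assms by induction (auto simp: distrib_left simp flip: mult.assoc)

lemma one_in_right_ideal_gen_graded:
  fixes G :: "int \<Rightarrow> 'a::ring_1 set"
  assumes mult: "\<And>i j a b. a \<in> G i \<Longrightarrow> b \<in> G j \<Longrightarrow> a * b \<in> G (i + j)"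
    and one: "1 \<in> G 0"
    and u: "\<And>j. j < k \<Longrightarrow> u j \<in> G d" and partition: "(\<Sum>j<k. u j * v j) = 1"
  shows "1 \<in> right_ideal_gen (G (int N * d))"
proof (induction N)
  case 0
  show ?case using one by (simp add: right_ideal_gen.base)
next
  case (Suc N)
  have "u j * 1 \<in> right_ideal_gen (G (int (Suc N) * d))" if "j < k" for j
    using Suc.IH by (rule right_ideal_gen_mult_left) (use mult u \<open>j < k\<close> in \<open>simp add: algebra_simps\<close>)
  then have "(\<Sum>j<k. u j * 1 * v j) \<in> right_ideal_gen (G (int (Suc N) * d))"
    by (auto intro: right_ideal_gen_sum right_ideal_gen.mult_right)
  then show ?case using partition by simp
qed

lemma graded_left_unit_eq_one:
  fixes G :: "int \<Rightarrow> 'a::ring_1 set"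
  assumes mult: "\<And>i j a b. a \<in> G i \<Longrightarrow> b \<in> G j \<Longrightarrow> a * b \<in> G (i + j)"
    and one: "1 \<in> G 0"
    and u: "\<And>j. j < k \<Longrightarrow> u j \<in> G 1" "(\<Sum>j<k. u j * v j) = 1"
    and u': "\<And>j. j < k' \<Longrightarrow> u' j \<in> G (- 1)" "(\<Sum>j<k'. u' j * v' j) = 1"
    and unit: "\<And>a. a \<in> G n \<Longrightarrow> e * a = a"
  shows "e = 1"
proof -
  have "1 \<in> right_ideal_gen (G n)"
  proof (cases "n \<ge> 0")
    case True
    then show ?thesis
      using one_in_right_ideal_gen_graded[OF mult one u, of "nat n"] by simp
  next
    case False
    then show ?thesis
      using one_in_right_ideal_gen_graded[OF mult one u', of "nat (- n)"] by simp
  qed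
  then show ?thesis using left_unit_right_ideal_gen unit by fastforce
qed

lemma subalgebra_spectral_mult:
  assumes "unital_cstar_algebra sc st" "circle_action sc st \<sigma>" "unital_star_subalgebra sc st \<A>"
    and "a \<in> \<A> \<inter> spectral_subspace sc \<sigma> i" "b \<in> \<A> \<inter> spectral_subspace sc \<sigma> j"
  shows "a * b \<in> \<A> \<inter> spectral_subspace sc \<sigma> (i + j)"
  using assms spectral_subspace_mult unfolding unital_star_subalgebra_def by blast

lemma subalgebra_spectral_star:
  assumes "unital_cstar_algebra sc st" "circle_action sc st \<sigma>" "unital_star_subalgebra sc st \<A>"
    and "a \<in> \<A> \<inter> spectral_subspace sc \<sigma> i"
  shows "st a \<in> \<A> \<inter> spectral_subspace sc \<sigma> (- i)"
  using assms spectral_subspace_star unfolding unital_star_subalgebra_def by blast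

lemma frame_sum_eq_one:
  assumes cstar: "unital_cstar_algebra sc st" and action: "circle_action sc st \<sigma>"
    and sub: "unital_star_subalgebra sc st \<A>"
    and zR_in: "\<forall>j<k. zR j \<in> \<A> \<inter> spectral_subspace sc \<sigma> 1"
    and zL_in: "\<forall>j<m. zL j \<in> \<A> \<inter> spectral_subspace sc \<sigma> 1"
    and zR_sum: "(\<Sum>j<k. zR j * st (zR j)) = 1"
    and zL_sum: "(\<Sum>j<m. st (zL j) * zL j) = 1"
    and frame: "\<forall>x\<in>\<A> \<inter> spectral_subspace sc \<sigma> n. (\<Sum>j<mn. \<zeta> j * (st (\<zeta> j) * x)) = x"
  shows "(\<Sum>j<mn. \<zeta> j * st (\<zeta> j)) = 1"
proof (rule graded_left_unit_eq_one[where G = "\<lambda>i. \<A> \<inter> spectral_subspace sc \<sigma> i"])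
  show "1 \<in> \<A> \<inter> spectral_subspace sc \<sigma> 0"
    using sub one_in_spectral_subspace_zero[OF cstar action]
    unfolding unital_star_subalgebra_def by blast
  show "st (zL j) \<in> \<A> \<inter> spectral_subspace sc \<sigma> (- 1)" if "j < m" for j
    using subalgebra_spectral_star[OF cstar action sub] zL_in that by blast
  show "(\<Sum>j<mn. \<zeta> j * st (\<zeta> j)) * a = a" if "a \<in> \<A> \<inter> spectral_subspace sc \<sigma> n" for a
    using frame that by (simp add: sum_distrib_right mult.assoc)
qed (use subalgebra_spectral_mult[OF cstar action sub] zR_in zR_sum zL_sum in auto)

theorem proposition7p7:
  fixes scA :: "complex \<Rightarrow> 'a::{real_normed_algebra_1,banach} \<Rightarrow> 'a"
    and st :: "'a \<Rightarrow> 'a"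
    and \<sigma> :: "complex \<Rightarrow> 'a \<Rightarrow> 'a"
    and \<A> :: "'a set"
    and scH :: "complex \<Rightarrow> 'h::banach \<Rightarrow> 'h"
    and ip :: "'h \<Rightarrow> 'h \<Rightarrow> complex"
    and H0 :: "'h set"
    and \<rho> :: "'a \<Rightarrow> 'h \<Rightarrow> 'h"
    and DomD :: "'h set"
    and D0 :: "'h \<Rightarrow> 'h"
    and \<delta>0 :: "'a \<Rightarrow> 'h \<Rightarrow> 'h"
    and \<phi> :: "'a \<Rightarrow> 'h \<Rightarrow> 'h"
    and \<delta> :: "'a \<Rightarrow> 'h \<Rightarrow> 'h"
    and \<mu> :: real
    and zR zL :: "nat \<Rightarrow> 'a"
    and k m :: nat
    and n :: int
    and \<zeta> :: "nat \<Rightarrow> 'a"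
    and mn :: nat
  defines "A \<equiv> spectral_subspace scA \<sigma>"
  assumes cstar: "unital_cstar_algebra scA st"
    and action: "circle_action scA st \<sigma>"
    (* the dense subalgebra \<A> *)
    and sub: "unital_star_subalgebra scA st \<A>"
    and dense: "closure \<A> = UNIV"
    and P0_pres: "\<forall>a\<in>\<A>. P0 \<sigma> a \<in> \<A>"
    and generated: "\<A> = star_alg_gen scA st (\<A> \<inter> A 1)"
    (* Hilbert spaces *)
    and hilb: "complex_hilbert scH ip"
    and sepH: "separable_set (UNIV :: 'h set)"
    and H0_sub: "complex_subspace scH H0" and H0_closed: "closed H0"
    and sepH0: "separable_set H0"
    (* rho : A_0 -> B(H_0) injective unital *-homomorphism *)
    and rho_bdd: "\<forall>a\<in>A 0. bounded_clinear_on scH H0 (\<rho> a)"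
    and rho_add: "\<forall>a\<in>A 0. \<forall>b\<in>A 0. \<forall>x\<in>H0. \<rho> (a + b) x = \<rho> a x + \<rho> b x"
    and rho_scale: "\<forall>c. \<forall>a\<in>A 0. \<forall>x\<in>H0. \<rho> (scA c a) x = scH c (\<rho> a x)"
    and rho_mult: "\<forall>a\<in>A 0. \<forall>b\<in>A 0. \<forall>x\<in>H0. \<rho> (a * b) x = \<rho> a (\<rho> b x)"
    and rho_one: "\<forall>x\<in>H0. \<rho> 1 x = x"
    and rho_star: "\<forall>a\<in>A 0. \<forall>x\<in>H0. \<forall>y\<in>H0. ip (\<rho> a x) y = ip x (\<rho> (st a) y)"
    and rho_inj: "\<forall>a\<in>A 0. \<forall>b\<in>A 0. (\<forall>x\<in>H0. \<rho> a x = \<rho> b x) \<longrightarrow> a = b"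
    (* D_0 selfadjoint on H_0, bounded commutators *)
    and D0_sa: "selfadjoint_on scH ip H0 DomD D0"
    and rho_dom: "\<forall>a\<in>\<A> \<inter> A 0. \<rho> a ` DomD \<subseteq> DomD"
    and delta0_bdd: "\<forall>a\<in>\<A> \<inter> A 0. bounded_clinear_on scH H0 (\<delta>0 a)"
    and delta0_comm: "\<forall>a\<in>\<A> \<inter> A 0. \<forall>x\<in>DomD. \<delta>0 a x = D0 (\<rho> a x) - \<rho> a (D0 x)"
    (* phi : A -> B(H) unital *-homomorphism *)
    and phi_bdd: "\<forall>a. bounded_clinear_op scH (\<phi> a)"
    and phi_add: "\<forall>a b x. \<phi> (a + b) x = \<phi> a x + \<phi> b x"
    and phi_scale: "\<forall>c a x. \<phi> (scA c a) x = scH c (\<phi> a x)"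
    and phi_mult: "\<forall>a b x. \<phi> (a * b) x = \<phi> a (\<phi> b x)"
    and phi_one: "\<forall>x. \<phi> 1 x = x"
    and phi_star: "\<forall>a x y. ip (\<phi> a x) y = ip x (\<phi> (st a) y)"
    (* delta : \<A> -> B(H) linear *)
    and delta_bdd: "\<forall>a\<in>\<A>. bounded_clinear_op scH (\<delta> a)"
    and delta_add: "\<forall>a\<in>\<A>. \<forall>b\<in>\<A>. \<forall>x. \<delta> (a + b) x = \<delta> a x + \<delta> b x"
    and delta_scale: "\<forall>c. \<forall>a\<in>\<A>. \<forall>x. \<delta> (scA c a) x = scH c (\<delta> a x)"
    (* (1) *)
    and compat: "\<forall>a\<in>\<A> \<inter> A 0. \<forall>\<xi>\<in>H0. \<delta> a \<xi> = \<delta>0 a \<xi> \<and> \<phi> a \<xi> = \<rho> a \<xi>"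
    (* (2) *)
    and mu_pos: "\<mu> > 0"
    and twisted_leibniz: "\<forall>j::int. \<forall>a\<in>\<A> \<inter> A j. \<forall>b\<in>\<A>. \<forall>x.
        \<delta> (a * b) x = \<delta> a (\<phi> b x) + scH (complex_of_real (\<mu> powi j)) (\<phi> a (\<delta> b x))"
    (* (3) *)
    and zR_in: "\<forall>j<k. zR j \<in> \<A> \<inter> A 1"
    and zL_in: "\<forall>j<m. zL j \<in> \<A> \<inter> A 1"
    and zR_sum: "(\<Sum>j<k. zR j * st (zR j)) = 1"
    and zL_sum: "(\<Sum>j<m. st (zL j) * zL j) = 1"
    and zR_delta: "\<forall>x. (\<Sum>j<k. \<phi> (zR j) (\<delta> (st (zR j)) x)) = 0"
    and zL_delta: "\<forall>x. (\<Sum>j<m. \<phi> (st (zL j)) (\<delta> (zL j) x)) = 0"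
    (* the frame for \<A>_n *)
    and frame_in: "\<forall>j<mn. \<zeta> j \<in> \<A> \<inter> A n"
    and frame: "\<forall>x\<in>\<A> \<inter> A n. (\<Sum>j<mn. \<zeta> j * (st (\<zeta> j) * x)) = x"
    and frame_delta: "\<forall>x. (\<Sum>j<mn. \<phi> (\<zeta> j) (\<delta> (st (\<zeta> j)) x)) = 0"
  shows "\<forall>x\<in>\<A> \<inter> A n. \<forall>\<xi>\<in>H0.
           (\<Sum>j<mn. \<phi> (\<zeta> j) (\<delta>0 (st (\<zeta> j) * x) \<xi>))
             = scH (complex_of_real (\<mu> powi (-n))) (\<delta> x \<xi>)"
proof (intro ballI)
  fix x \<xi> assume x: "x \<in> \<A> \<inter> A n" and \<xi>: "\<xi> \<in> H0"
  interpret scH: module scH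
    using hilb module_complex_normed_structure unfolding complex_hilbert_def by blast
  have frame_unit: "(\<Sum>j<mn. \<zeta> j * st (\<zeta> j)) = 1"
    using frame_sum_eq_one[OF cstar action sub] zR_in zL_in zR_sum zL_sum frame
    unfolding A_def by blast
  have phi_linear: "linear (\<phi> a)" and phi_scale_right: "\<phi> a (scH c y) = scH c (\<phi> a y)" for a c y
    using phi_bdd unfolding bounded_clinear_op_def bounded_linear_def by blast+
  have phi_sum: "\<phi> (\<Sum>j<mn. f j) y = (\<Sum>j<mn. \<phi> (f j) y)" for f y
    by (rule additive.sum) (unfold_locales, rule phi_add[rule_format])
  let ?c = "complex_of_real (\<mu> powi (- n))"
  have leibniz_term: "\<phi> (\<zeta> j) (\<delta>0 (st (\<zeta> j) * x) \<xi>) =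
      \<phi> (\<zeta> j) (\<delta> (st (\<zeta> j)) (\<phi> x \<xi>)) + scH ?c (\<phi> (\<zeta> j * st (\<zeta> j)) (\<delta> x \<xi>))"
    if "j < mn" for j
  proof -
    have \<zeta>_star: "st (\<zeta> j) \<in> \<A> \<inter> A (- n)"
      using subalgebra_spectral_star[OF cstar action sub] frame_in that unfolding A_def by blast
    then have "st (\<zeta> j) * x \<in> \<A> \<inter> A 0"
      using subalgebra_spectral_mult[OF cstar action sub _ x[unfolded A_def]] unfolding A_def by fastforce
    then have "\<delta>0 (st (\<zeta> j) * x) \<xi> = \<delta> (st (\<zeta> j) * x) \<xi>" using compat \<xi> by metis
    also have "\<dots> = \<delta> (st (\<zeta> j)) (\<phi> x \<xi>) + scH ?c (\<phi> (st (\<zeta> j)) (\<delta> x \<xi>))"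
      using twisted_leibniz \<zeta>_star x by blast
    finally show ?thesis by (simp add: linear_add[OF phi_linear] phi_scale_right phi_mult)
  qed
  have "(\<Sum>j<mn. \<phi> (\<zeta> j) (\<delta>0 (st (\<zeta> j) * x) \<xi>)) =
      (\<Sum>j<mn. \<phi> (\<zeta> j) (\<delta> (st (\<zeta> j)) (\<phi> x \<xi>))) + (\<Sum>j<mn. scH ?c (\<phi> (\<zeta> j * st (\<zeta> j)) (\<delta> x \<xi>)))"
    using leibniz_term by (simp add: sum.distrib)
  also have "\<dots> = scH ?c (\<phi> (\<Sum>j<mn. \<zeta> j * st (\<zeta> j)) (\<delta> x \<xi>))"
    using frame_delta by (simp add: scH.scale_sum_right phi_sum)
  also have "\<dots> = scH ?c (\<delta> x \<xi>)" using frame_unit phi_one by simp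
  finally show "(\<Sum>j<mn. \<phi> (\<zeta> j) (\<delta>0 (st (\<zeta> j) * x) \<xi>)) = scH ?c (\<delta> x \<xi>)" .
qed

end
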